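(* Let $n\ge3$, let $h$ be a hermitian form on $\mathbb{C}^n$ of signature $(n-1,1)$ and $G(\mathbb{R})=\mathrm{SU}(n-1,1)$. Let $X^{ss}(\mathbb{R})$ be the set of semi-stable triples of $h$-isotropic lines and define $p([v_1],[v_2],[v_3])=u/|u|$ where $u=h(v_1,v_3)h(v_3,v_2)h(v_2,v_1)$. Then $p$ induces a homeomorphism of the separated quotient $X^{ss}(\mathbb{R})/G(\mathbb{R})$ onto $H=\{u\in\mathrm{U}(1):\mathrm{Re}(u)\le0\}$.
   Context: $h(v,w)$ is linear in $w$ and conjugate-linear in $v$. A triple of isotropic lines $(L_1,L_2,L_3)$ is semi-stable if the triple of flags $(L_i,L_i^\perp)$ is semi-stable for the diagonal $\mathrm{SL}_n(\mathbb{C})$-action on the cube of the variety of line-hyperplane flags, linearized via $(L_i,H_i)\mapsto(L_i,H_i^\perp)\in(\mathbb{P}(\mathbb{C}^n)\times\mathbb{P}((\mathbb{C}^n)^\vee))^3$ with $\bigotimes_i\mathrm{pr}_i^*(\mathcal{O}(1)\boxtimes\mathcal{O}(1))$; for isotropic lines this means the three lines are pairwise distinct, and then $u\ne0$ and $u/|u|$ does not depend on the generators $v_i$. The separated quotient $X^{ss}(\mathbb{R})/G(\mathbb{R})$ is the set of closed $G(\mathbb{R})$-orbits in $X^{ss}(\mathbb{R})$, each point being sent to the unique closed orbit in the closure of its orbit, with the quotient topology. *)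

theory Defs
  imports "HOL-Analysis.Analysis"
begin

definition hform :: "complex^'n^'n \<Rightarrow> complex^'n \<Rightarrow> complex^'n \<Rightarrow> complex" where
  "hform Hm v w = (\<Sum>i\<in>UNIV. \<Sum>j\<in>UNIV. cnj (v $ i) * (Hm $ i $ j) * (w $ j))"

definition hermitian_matrix :: "complex^'n^'n \<Rightarrow> bool" where
  "hermitian_matrix Hm \<longleftrightarrow> (\<forall>i j. Hm $ i $ j = cnj (Hm $ j $ i))"

definition signature_n1_1 :: "complex^'n^'n \<Rightarrow> bool" where
  "signature_n1_1 Hm \<longleftrightarrow> (\<exists>(e :: 'n \<Rightarrow> complex^'n) k. \<forall>i j.
      hform Hm (e i) (e j) = (if i = j then (if i = k then -1 else 1) else 0))"

definition SU_group :: "complex^'n^'n \<Rightarrow> (complex^'n^'n) set" where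
  "SU_group Hm = {g. det g = 1 \<and> (\<forall>v w. hform Hm (g *v v) (g *v w) = hform Hm v w)}"

definition cline :: "complex^'n \<Rightarrow> (complex^'n) set" where
  "cline v = (\<lambda>c. c *s v) ` UNIV"

definition quotient_topology :: "'a topology \<Rightarrow> ('a \<Rightarrow> 'b) \<Rightarrow> 'b set \<Rightarrow> 'b topology" where
  "quotient_topology X f Y = topology (\<lambda>U. U \<subseteq> Y \<and> openin X {x \<in> topspace X. f x \<in> U})"

definition proj_space :: "(complex^'n) set set" where
  "proj_space = {cline v | v. v \<noteq> 0}"

definition proj_top :: "(complex^'n) set topology" where
  "proj_top = quotient_topology (subtopology euclidean (UNIV - {0})) cline proj_space"

definition isotropic_line :: "complex^'n^'n \<Rightarrow> (complex^'n) set \<Rightarrow> bool" where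
  "isotropic_line Hm L \<longleftrightarrow> (\<exists>v. v \<noteq> 0 \<and> hform Hm v v = 0 \<and> L = cline v)"

text \<open>Semi-stable triples of isotropic lines: pairwise distinct (see context).\<close>
definition Xss :: "complex^'n^'n \<Rightarrow> ((complex^'n) set \<times> (complex^'n) set \<times> (complex^'n) set) set" where
  "Xss Hm = {(L1, L2, L3). isotropic_line Hm L1 \<and> isotropic_line Hm L2 \<and> isotropic_line Hm L3
              \<and> L1 \<noteq> L2 \<and> L1 \<noteq> L3 \<and> L2 \<noteq> L3}"

definition Xss_top :: "complex^'n^'n \<Rightarrow> ((complex^'n) set \<times> (complex^'n) set \<times> (complex^'n) set) topology" where
  "Xss_top Hm = subtopology (prod_topology proj_top (prod_topology proj_top proj_top)) (Xss Hm)"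

definition act_triple :: "complex^'n^'n \<Rightarrow> (complex^'n) set \<times> (complex^'n) set \<times> (complex^'n) set
    \<Rightarrow> (complex^'n) set \<times> (complex^'n) set \<times> (complex^'n) set" where
  "act_triple g x = (case x of (L1, L2, L3) \<Rightarrow>
      ((\<lambda>v. g *v v) ` L1, (\<lambda>v. g *v v) ` L2, (\<lambda>v. g *v v) ` L3))"

definition orbit :: "complex^'n^'n \<Rightarrow> (complex^'n) set \<times> (complex^'n) set \<times> (complex^'n) set
    \<Rightarrow> ((complex^'n) set \<times> (complex^'n) set \<times> (complex^'n) set) set" where
  "orbit Hm x = {act_triple g x | g. g \<in> SU_group Hm}"

text \<open>Closed orbits in X^ss(R) (the points of the separated quotient).\<close>
definition closed_orbits where
  "closed_orbits Hm = {orbit Hm x | x. x \<in> Xss Hm \<and> closedin (Xss_top Hm) (orbit Hm x)}"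

definition sep_proj where
  "sep_proj Hm x = (THE C. C \<in> closed_orbits Hm \<and> C \<subseteq> (Xss_top Hm) closure_of (orbit Hm x))"

definition sep_quotient_top where
  "sep_quotient_top Hm = quotient_topology (Xss_top Hm) (sep_proj Hm) (closed_orbits Hm)"

definition gen :: "(complex^'n) set \<Rightarrow> complex^'n" where
  "gen L = (SOME v. v \<in> L \<and> v \<noteq> 0)"

definition pinv :: "complex^'n^'n \<Rightarrow> (complex^'n) set \<times> (complex^'n) set \<times> (complex^'n) set \<Rightarrow> complex" where
  "pinv Hm x = (case x of (L1, L2, L3) \<Rightarrow>
     (let u = hform Hm (gen L1) (gen L3) * hform Hm (gen L3) (gen L2) * hform Hm (gen L2) (gen L1)
      in u / complex_of_real (cmod u)))"

definition Hset :: "complex set" where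
  "Hset = {u. cmod u = 1 \<and> Re u \<le> 0}"

end

theory Submission
  imports Defs
begin

text \<open>Fix a frame e in which h is diag(1,...,1,-1), the timelike vector being e k. A semi-stable
  triple of isotropic lines has generators v1, v2, v3 with pairwise nonzero products, and can be
  rescaled so that h(v1,v2) = h(v1,v3) = -1 and |h(v2,v3)| = 1. Then h(v2,v3) is the conjugate of
  the invariant p, and (v1 \<plusminus> v2)/sqrt 2 together with v3 + cnj p v1 - v2 (of h-norm -2 Re p)
  extends to a new Lorentz frame; this forces Re p \<le> 0, and the element of SU(h) mapping the new
  frame to e (up to a scalar) moves the triple to a standard triple depending only on p. Hence the
  orbits are exactly the fibres of the invariant, all of them closed, so the separated quotient is
  the orbit space; the standard triple is a continuous section of the invariant, which makes the
  induced bijection open.\<close>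

lemma hform_add_right: "hform Hm v (w + w') = hform Hm v w + hform Hm v w'"
  unfolding hform_def by (simp add: distrib_left sum.distrib)

lemma hform_add_left: "hform Hm (v + v') w = hform Hm v w + hform Hm v' w"
  unfolding hform_def by (simp add: distrib_left distrib_right sum.distrib)

lemma hform_scale_right: "hform Hm v (c *s w) = c * hform Hm v w"
  unfolding hform_def by (simp add: sum_distrib_left mult.assoc mult.left_commute)

lemma hform_scale_left: "hform Hm (c *s v) w = cnj c * hform Hm v w"
  unfolding hform_def by (simp add: sum_distrib_left mult.assoc mult.left_commute)

lemma hform_diff_right: "hform Hm v (w - w') = hform Hm v w - hform Hm v w'"
  unfolding hform_def by (simp add: right_diff_distrib sum_subtractf)

lemma hform_diff_left: "hform Hm (v - v') w = hform Hm v w - hform Hm v' w"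
  unfolding hform_def by (simp add: left_diff_distrib right_diff_distrib sum_subtractf)

lemma hform_uminus_left: "hform Hm (- v) w = - hform Hm v w"
  unfolding hform_def by (simp add: sum_negf)

lemma hform_uminus_right: "hform Hm v (- w) = - hform Hm v w"
  unfolding hform_def by (simp add: sum_negf)

lemma hform_zero_right [simp]: "hform Hm v 0 = 0"
  unfolding hform_def by simp

lemma hform_zero_left [simp]: "hform Hm 0 w = 0"
  unfolding hform_def by simp

lemmas hform_simps = hform_add_right hform_add_left hform_scale_right hform_scale_left
  hform_diff_right hform_diff_left hform_uminus_left hform_uminus_right

lemma hform_sum_right: "finite S \<Longrightarrow> hform Hm v (sum f S) = (\<Sum>x\<in>S. hform Hm v (f x))"
  by (induction S rule: finite_induct) (auto simp: hform_add_right)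

lemma hform_sum_left: "finite S \<Longrightarrow> hform Hm (sum f S) w = (\<Sum>x\<in>S. hform Hm (f x) w)"
  by (induction S rule: finite_induct) (auto simp: hform_add_left)

lemma hform_conj_sym:
  assumes "hermitian_matrix Hm"
  shows "hform Hm w v = cnj (hform Hm v w)"
proof -
  have "cnj (hform Hm v w) = (\<Sum>i\<in>UNIV. \<Sum>j\<in>UNIV. v $ i * cnj (Hm $ i $ j) * cnj (w $ j))"
    unfolding hform_def by simp
  also have "\<dots> = (\<Sum>j\<in>UNIV. \<Sum>i\<in>UNIV. v $ i * cnj (Hm $ i $ j) * cnj (w $ j))"
    by (rule sum.swap)
  also have "\<dots> = hform Hm w v"
    unfolding hform_def
  proof (intro sum.cong refl)
    fix i j
    have "cnj (Hm $ j $ i) = Hm $ i $ j"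
      using assms unfolding hermitian_matrix_def by (metis complex_cnj_cnj)
    then show "v $ j * cnj (Hm $ j $ i) * cnj (w $ i) = cnj (w $ i) * Hm $ i $ j * v $ j"
      by (simp add: mult_ac)
  qed
  finally show ?thesis by simp
qed

lemma hform_conj_sym_eq_0:
  "hermitian_matrix Hm \<Longrightarrow> hform Hm w v = 0 \<longleftrightarrow> hform Hm v w = 0"
  using hform_conj_sym[of Hm w v] by simp

lemma hform_self_real: "hermitian_matrix Hm \<Longrightarrow> hform Hm v v = of_real (Re (hform Hm v v))"
  using hform_conj_sym[of Hm v v] by (metis Reals_cnj_iff complex_is_Real_iff of_real_Re)

lemma cnj_mult_self: "cnj b * b = complex_of_real ((cmod b)\<^sup>2)"
  by (metis complex_norm_square mult.commute)

section \<open>Lorentz frames\<close>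

definition lorentz_sign :: "'n \<Rightarrow> 'n \<Rightarrow> complex" where
  "lorentz_sign k i = (if i = k then -1 else 1)"

lemma lorentz_sign_square [simp]: "lorentz_sign k i * lorentz_sign k i = 1"
  by (simp add: lorentz_sign_def)

lemma cnj_lorentz_sign [simp]: "cnj (lorentz_sign k i) = lorentz_sign k i"
  by (simp add: lorentz_sign_def)

lemma lorentz_sign_nonzero [simp]: "lorentz_sign k i \<noteq> 0"
  by (simp add: lorentz_sign_def)

definition lorentz_frame :: "complex^'n^'n \<Rightarrow> 'n \<Rightarrow> ('n \<Rightarrow> complex^'n) \<Rightarrow> bool" where
  "lorentz_frame Hm k f \<longleftrightarrow>
     (\<forall>i j. hform Hm (f i) (f j) = (if i = j then lorentz_sign k i else 0))"

lemma signature_n1_1_iff_lorentz_frame: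
  "signature_n1_1 Hm \<longleftrightarrow> (\<exists>e k. lorentz_frame Hm k e)"
  unfolding signature_n1_1_def lorentz_frame_def lorentz_sign_def by simp

lemma lorentz_frame_hform:
  "lorentz_frame Hm k f \<Longrightarrow> hform Hm (f i) (f j) = (if i = j then lorentz_sign k i else 0)"
  unfolding lorentz_frame_def by blast

lemma gram_matrix_eq_hform:
  fixes f :: "'n \<Rightarrow> complex^'n"
  shows "((\<chi> i r. cnj (f i $ r)) ** Hm ** (\<chi> r c. f c $ r)) $ i $ j = hform Hm (f i) (f j)"
proof -
  have "((\<chi> i r. cnj (f i $ r)) ** Hm ** (\<chi> r c. f c $ r)) $ i $ j
      = (\<Sum>s\<in>UNIV. (\<Sum>r\<in>UNIV. cnj (f i $ r) * Hm $ r $ s) * f j $ s)"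
    by (simp add: matrix_matrix_mult_def)
  also have "\<dots> = (\<Sum>s\<in>UNIV. \<Sum>r\<in>UNIV. cnj (f i $ r) * Hm $ r $ s * f j $ s)"
    by (simp add: sum_distrib_right)
  also have "\<dots> = hform Hm (f i) (f j)"
    unfolding hform_def by (rule sum.swap)
  finally show ?thesis .
qed

lemma lorentz_frame_det_nonzero:
  fixes f :: "'n \<Rightarrow> complex^'n"
  assumes "lorentz_frame Hm k f"
  shows "det ((\<chi> r c. f c $ r) :: complex^'n^'n) \<noteq> 0" "det Hm \<noteq> 0"
proof -
  define E where "E = ((\<chi> r c. f c $ r) :: complex^'n^'n)"
  define A where "A = ((\<chi> i r. cnj (f i $ r)) :: complex^'n^'n)"
  have "(A ** Hm ** E) $ i $ j = (if i = j then lorentz_sign k i else 0)" for i j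
    using gram_matrix_eq_hform[of f Hm i j] assms unfolding lorentz_frame_def A_def E_def by simp
  then have "det (A ** Hm ** E) = (\<Prod>i\<in>UNIV. lorentz_sign k i)"
    by (subst det_diagonal) auto
  also have "\<dots> \<noteq> 0" by (simp add: prod_zero_iff)
  finally have "det A * det Hm * det E \<noteq> 0" by (simp add: det_mul)
  then show "det ((\<chi> r c. f c $ r) :: complex^'n^'n) \<noteq> 0" "det Hm \<noteq> 0"
    by (auto simp: E_def)
qed

lemma matrix_of_columns_mult:
  "((\<chi> r c. f c $ r) :: complex^'n^'n) *v y = (\<Sum>c\<in>UNIV. (y $ c) *s f c)"
  by (simp add: vec_eq_iff matrix_vector_mult_def sum_component mult.commute)

lemma lorentz_frame_expansion:
  fixes f :: "'n \<Rightarrow> complex^'n"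
  assumes fr: "lorentz_frame Hm k f"
  shows "w = (\<Sum>i\<in>UNIV. (lorentz_sign k i * hform Hm (f i) w) *s f i)"
proof -
  define E where "E = ((\<chi> r c. f c $ r) :: complex^'n^'n)"
  have "invertible E" using lorentz_frame_det_nonzero(1)[OF fr] invertible_det_nz E_def by blast
  then obtain B where B: "E ** B = mat 1" using invertible_right_inverse by blast
  define y where "y = B *v w"
  have wy: "w = (\<Sum>c\<in>UNIV. (y $ c) *s f c)"
    by (metis B E_def matrix_of_columns_mult matrix_vector_mul_assoc matrix_vector_mul_lid y_def)
  have "hform Hm (f i) w = y $ i * lorentz_sign k i" for i
  proof -
    have "hform Hm (f i) w = (\<Sum>c\<in>UNIV. y $ c * hform Hm (f i) (f c))"
      by (subst wy) (simp add: hform_sum_right hform_scale_right)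
    also have "\<dots> = (\<Sum>c\<in>UNIV. if c = i then y $ c * lorentz_sign k i else 0)"
      using fr unfolding lorentz_frame_def by (intro sum.cong) auto
    finally show ?thesis by simp
  qed
  then have "y $ i = lorentz_sign k i * hform Hm (f i) w" for i
    by (simp add: mult.assoc[symmetric])
  then have "(\<Sum>c\<in>UNIV. (y $ c) *s f c) = (\<Sum>i\<in>UNIV. (lorentz_sign k i * hform Hm (f i) w) *s f i)"
    by simp
  with wy show ?thesis by simp
qed

lemma hform_lorentz_frame_expansion:
  assumes fr: "lorentz_frame Hm k f"
  shows "hform Hm v w = (\<Sum>i\<in>UNIV. lorentz_sign k i * cnj (hform Hm (f i) v) * hform Hm (f i) w)"
proof -
  have "hform Hm v w = hform Hm (\<Sum>i\<in>UNIV. (lorentz_sign k i * hform Hm (f i) v) *s f i) w"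
    using lorentz_frame_expansion[OF fr, of v] by simp
  also have "\<dots> = (\<Sum>i\<in>UNIV. lorentz_sign k i * cnj (hform Hm (f i) v) * hform Hm (f i) w)"
    by (simp add: hform_sum_left hform_scale_left mult.assoc)
  finally show ?thesis .
qed

lemma lorentz_frame_orthogonal_eq_0:
  assumes "lorentz_frame Hm k f" and "\<And>i. hform Hm (f i) w = 0"
  shows "w = 0"
  using lorentz_frame_expansion[OF assms(1), of w] assms(2) by simp

lemma hform_pos_orthogonal_frame_timelike:
  assumes fr: "lorentz_frame Hm k e" and hk: "hform Hm (e k) y = 0" and y: "y \<noteq> 0"
  shows "Re (hform Hm y y) > 0"
proof -
  have "lorentz_sign k i * cnj (hform Hm (e i) y) * hform Hm (e i) y
      = complex_of_real (if i = k then 0 else (cmod (hform Hm (e i) y))\<^sup>2)" for i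
    using hk by (simp add: lorentz_sign_def mult.assoc cnj_mult_self)
  then have eq: "Re (hform Hm y y) = (\<Sum>i\<in>UNIV. (if i = k then 0 else (cmod (hform Hm (e i) y))\<^sup>2))"
    by (simp add: hform_lorentz_frame_expansion[OF fr, of y y] Re_sum)
  obtain i where i: "hform Hm (e i) y \<noteq> 0"
    using lorentz_frame_orthogonal_eq_0[OF fr] y by blast
  then have "i \<noteq> k" using hk by auto
  with i show ?thesis unfolding eq by (intro sum_pos2[of _ i]) auto
qed

text \<open>The combination h(e k, z) f - h(e k, f) z is orthogonal to e k, hence positive; since
  h(e k, f) \<noteq> 0, this forces h(z, z) > 0.\<close>

lemma hform_pos_orthogonal_timelike:
  assumes fr: "lorentz_frame Hm k e" and herm: "hermitian_matrix Hm"
    and hf: "hform Hm f f = -1" and hfz: "hform Hm f z = 0" and z: "z \<noteq> 0"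
  shows "Re (hform Hm z z) > 0"
proof -
  have hzf: "hform Hm z f = 0" using hfz hform_conj_sym_eq_0[OF herm] by blast
  define a where "a = hform Hm (e k) z"
  define b where "b = - hform Hm (e k) f"
  have b: "b \<noteq> 0"
  proof
    assume "b = 0"
    then have "hform Hm (e k) f = 0" by (simp add: b_def)
    moreover have "f \<noteq> 0" using hf by auto
    ultimately have "Re (hform Hm f f) > 0" by (rule hform_pos_orthogonal_frame_timelike[OF fr])
    then show False using hf by simp
  qed
  define y where "y = a *s f + b *s z"
  have y: "y \<noteq> 0"
  proof
    assume y0: "y = 0"
    have "hform Hm f y = - a" by (simp add: y_def hform_simps hf hfz)
    then have "a = 0" using y0 by simp
    then show False using y0 b z by (simp add: y_def vec_eq_iff)
  qed
  have "hform Hm (e k) y = 0" by (simp add: y_def hform_simps a_def b_def)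
  then have "Re (hform Hm y y) > 0" using hform_pos_orthogonal_frame_timelike[OF fr _ y] by blast
  moreover have "hform Hm y y = - (cnj a * a) + cnj b * b * hform Hm z z"
    by (simp add: y_def hform_simps hf hfz hzf algebra_simps)
  ultimately have "(cmod a)\<^sup>2 < (cmod b)\<^sup>2 * Re (hform Hm z z)"
    by (simp add: cnj_mult_self)
  then have "0 < (cmod b)\<^sup>2 * Re (hform Hm z z)"
    using zero_le_power2[of "cmod a"] by linarith
  then show ?thesis by (simp add: zero_less_mult_iff)
qed

lemma isotropic_orthogonal_proportional:
  assumes fr: "lorentz_frame Hm k e" and herm: "hermitian_matrix Hm"
    and v: "v \<noteq> 0" and hv: "hform Hm v v = 0" and hw: "hform Hm w w = 0" and hvw: "hform Hm v w = 0"
  shows "\<exists>c. w = c *s v"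
proof -
  have hwv: "hform Hm w v = 0" using hvw hform_conj_sym_eq_0[OF herm] by blast
  define a where "a = hform Hm (e k) w"
  define b where "b = - hform Hm (e k) v"
  have b: "b \<noteq> 0"
  proof
    assume "b = 0"
    then have "Re (hform Hm v v) > 0"
      by (intro hform_pos_orthogonal_frame_timelike[OF fr _ v]) (simp add: b_def)
    then show False using hv by simp
  qed
  define y where "y = a *s v + b *s w"
  have "hform Hm (e k) y = 0" "hform Hm y y = 0"
    by (simp_all add: y_def hform_simps a_def b_def hv hw hvw hwv)
  then have "y = 0" using hform_pos_orthogonal_frame_timelike[OF fr, of y] by force
  then have "w = (- a / b) *s v"
    using b by (simp add: y_def vec_eq_iff field_simps) (metis add_eq_0_iff mult.commute)
  then show ?thesis by blast
qed

lemma exists_not_in_span_smaller: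
  fixes F :: "'n \<Rightarrow> complex^'n" and S :: "'n set"
  assumes "S \<noteq> UNIV"
  shows "\<exists>y. y \<notin> vec.span (F ` S)"
proof (rule ccontr)
  assume "\<not> ?thesis"
  then have "vec.dim (UNIV :: (complex^'n) set) \<le> card (F ` S)"
    by (intro vec.dim_le_card) auto
  also have "\<dots> \<le> card S" by (rule card_image_le) simp
  also have "\<dots> < CARD('n)" using assms by (intro psubset_card_mono) auto
  finally show False by (simp add: card_cart_basis)
qed

text \<open>Gram-Schmidt: the projection of a vector outside the span of the partial frame onto its
  orthogonal complement is orthogonal to the timelike F k, hence spacelike.\<close>

lemma partial_lorentz_frame_extend_step:
  assumes herm: "hermitian_matrix Hm" and fe: "lorentz_frame Hm k e" and kS: "k \<in> S"
    and FS: "\<forall>i\<in>S. \<forall>j\<in>S. hform Hm (F i) (F j) = (if i = j then lorentz_sign k i else 0)"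
    and "S \<noteq> UNIV"
  shows "\<exists>v. hform Hm v v = 1 \<and> (\<forall>j\<in>S. hform Hm (F j) v = 0)"
proof -
  obtain y where y: "y \<notin> vec.span (F ` S)" using exists_not_in_span_smaller assms(5) by blast
  define z where "z = y - (\<Sum>j\<in>S. (lorentz_sign k j * hform Hm (F j) y) *s F j)"
  have z0: "z \<noteq> 0"
  proof
    assume "z = 0"
    then have "y = (\<Sum>j\<in>S. (lorentz_sign k j * hform Hm (F j) y) *s F j)" by (simp add: z_def)
    also have "\<dots> \<in> vec.span (F ` S)"
      by (intro vec.span_sum vec.span_scale vec.span_base) auto
    finally show False using y by simp
  qed
  have orth: "hform Hm (F j) z = 0" if j: "j \<in> S" for j
  proof -
    have "hform Hm (F j) (\<Sum>j\<in>S. (lorentz_sign k j * hform Hm (F j) y) *s F j)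
        = (\<Sum>l\<in>S. lorentz_sign k l * hform Hm (F l) y * hform Hm (F j) (F l))"
      by (simp add: hform_sum_right hform_scale_right)
    also have "\<dots> = (\<Sum>l\<in>S. if l = j then hform Hm (F j) y else 0)"
      using FS j by (intro sum.cong refl) (auto simp: mult.commute mult.left_commute)
    finally show ?thesis using j by (simp add: z_def hform_diff_right)
  qed
  have "hform Hm (F k) (F k) = -1" using FS kS by (simp add: lorentz_sign_def)
  then have pos: "Re (hform Hm z z) > 0"
    using hform_pos_orthogonal_timelike[OF fe herm _ orth[OF kS] z0] by blast
  define r where "r = Re (hform Hm z z)"
  have zz: "hform Hm z z = complex_of_real r" using hform_self_real[OF herm] r_def by blast
  define v where "v = complex_of_real (1 / sqrt r) *s z"
  have "hform Hm v v = complex_of_real (1 / sqrt r) * complex_of_real (1 / sqrt r) * complex_of_real r"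
    by (simp add: v_def hform_simps zz)
  also have "\<dots> = 1" using pos r_def by (simp flip: of_real_mult)
  finally have "hform Hm v v = 1" .
  moreover have "\<forall>j\<in>S. hform Hm (F j) v = 0" by (simp add: v_def hform_simps orth)
  ultimately show ?thesis by blast
qed

lemma partial_lorentz_frame_extend:
  assumes herm: "hermitian_matrix Hm" and fe: "lorentz_frame Hm k e"
  shows "k \<in> S \<Longrightarrow> \<forall>i\<in>S. \<forall>j\<in>S. hform Hm (F i) (F j) = (if i = j then lorentz_sign k i else 0)
    \<Longrightarrow> \<exists>F'. (\<forall>i\<in>S. F' i = F i) \<and> lorentz_frame Hm k F'"
proof (induction "card (UNIV - S)" arbitrary: S F rule: less_induct)
  case less
  show ?case
  proof (cases "S = UNIV")
    case True
    then show ?thesis using less.prems unfolding lorentz_frame_def by auto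
  next
    case False
    then obtain i where i: "i \<notin> S" by blast
    obtain v where v: "hform Hm v v = 1" "\<forall>j\<in>S. hform Hm (F j) v = 0"
      using partial_lorentz_frame_extend_step[OF herm fe less.prems False] by blast
    then have v': "\<forall>j\<in>S. hform Hm v (F j) = 0" using hform_conj_sym_eq_0[OF herm] by blast
    have ik: "i \<noteq> k" using i less.prems(1) by auto
    have G: "\<forall>a\<in>insert i S. \<forall>b\<in>insert i S.
        hform Hm ((F(i := v)) a) ((F(i := v)) b) = (if a = b then lorentz_sign k a else 0)"
    proof (intro ballI)
      fix a b assume "a \<in> insert i S" "b \<in> insert i S"
      then consider "a = i" "b = i" | "a = i" "b \<in> S" "b \<noteq> i" | "a \<in> S" "a \<noteq> i" "b = i"
        | "a \<in> S" "b \<in> S" "a \<noteq> i" "b \<noteq> i"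
        using i by blast
      then show "hform Hm ((F(i := v)) a) ((F(i := v)) b) = (if a = b then lorentz_sign k a else 0)"
        by cases (use v v' ik less.prems(2) in \<open>auto simp: lorentz_sign_def\<close>)
    qed
    have "card (UNIV - insert i S) < card (UNIV - S)"
      using i by (intro psubset_card_mono) auto
    then obtain F' where F': "\<forall>a\<in>insert i S. F' a = (F(i := v)) a" "lorentz_frame Hm k F'"
      using less.hyps[OF _ _ G] less.prems(1) by blast
    then have "\<forall>a\<in>S. F' a = F a" using i by (metis fun_upd_other insertCI)
    then show ?thesis using F'(2) by blast
  qed
qed

text \<open>When \<sigma> = 0, z is forced to vanish, being isotropic and orthogonal to the timelike Fk.\<close>

lemma lorentz_frame_through:
  assumes herm: "hermitian_matrix Hm" and fe: "lorentz_frame Hm k e"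
    and d: "a \<noteq> k" "b \<noteq> k" "a \<noteq> b"
    and hF: "hform Hm Fk Fk = -1" "hform Hm Fa Fa = 1" "hform Hm Fk Fa = 0"
    and hz: "hform Hm Fk z = 0" "hform Hm Fa z = 0"
    and hzz: "hform Hm z z = complex_of_real (\<sigma> * \<sigma>)" and \<sigma>: "\<sigma> \<ge> 0"
  shows "\<exists>F. lorentz_frame Hm k F \<and> F k = Fk \<and> F a = Fa \<and> z = complex_of_real \<sigma> *s F b"
proof -
  have hF': "hform Hm Fa Fk = 0" "hform Hm z Fk = 0" "hform Hm z Fa = 0"
    using hF(3) hz hform_conj_sym_eq_0[OF herm] by blast+
  show ?thesis
  proof (cases "\<sigma> = 0")
    case True
    then have z0: "z = 0" using hform_pos_orthogonal_timelike[OF fe herm hF(1) hz(1)] hzz by force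
    define F0 where "F0 = (\<lambda>i. if i = k then Fk else Fa)"
    have "\<forall>i\<in>{k,a}. \<forall>j\<in>{k,a}. hform Hm (F0 i) (F0 j) = (if i = j then lorentz_sign k i else 0)"
      using d hF hF' by (auto simp: F0_def lorentz_sign_def)
    then obtain F where "\<forall>i\<in>{k,a}. F i = F0 i" "lorentz_frame Hm k F"
      using partial_lorentz_frame_extend[OF herm fe, of "{k,a}" F0] by blast
    then show ?thesis using d True z0 by (intro exI[of _ F]) (auto simp: F0_def)
  next
    case False
    then have \<sigma>0: "\<sigma> > 0" using \<sigma> by simp
    define Fb where "Fb = complex_of_real (1 / \<sigma>) *s z"
    have "hform Hm Fb Fb = complex_of_real (1 / (\<sigma> * \<sigma>)) * hform Hm z z"
      by (simp add: Fb_def hform_simps)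
    also have "\<dots> = 1" using \<sigma>0 by (simp add: hzz flip: of_real_mult)
    finally have hb: "hform Hm Fb Fb = 1" "hform Hm Fk Fb = 0" "hform Hm Fa Fb = 0"
      "hform Hm Fb Fk = 0" "hform Hm Fb Fa = 0"
      by (simp_all add: Fb_def hform_simps hz hF')
    define F0 where "F0 = (\<lambda>i. if i = k then Fk else if i = a then Fa else Fb)"
    have "\<forall>i\<in>{k,a,b}. \<forall>j\<in>{k,a,b}. hform Hm (F0 i) (F0 j) = (if i = j then lorentz_sign k i else 0)"
      using d hF hF' hb by (auto simp: F0_def lorentz_sign_def)
    then obtain F where F: "\<forall>i\<in>{k,a,b}. F i = F0 i" "lorentz_frame Hm k F"
      using partial_lorentz_frame_extend[OF herm fe, of "{k,a,b}" F0] by blast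
    have "z = complex_of_real \<sigma> *s Fb" using \<sigma>0 by (simp add: Fb_def vec_eq_iff)
    then show ?thesis using F d by (intro exI[of _ F]) (auto simp: F0_def)
  qed
qed

lemma det_map_cnj: "det ((\<chi> i j. cnj (A $ i $ j)) :: complex^'n^'n) = cnj (det A)"
  unfolding det_def by simp

lemma hform_axis: "hform Hm (axis i 1) (axis j 1) = Hm $ i $ j"
proof -
  have "hform Hm (axis i 1) (axis j 1)
      = (\<Sum>a\<in>UNIV. if a = i then (\<Sum>b\<in>UNIV. if b = j then Hm $ a $ b else 0) else 0)"
    unfolding hform_def by (intro sum.cong refl) (auto simp: axis_def of_bool_def[symmetric])
  also have "\<dots> = Hm $ i $ j" by simp
  finally show ?thesis .
qed

lemma matrix_vector_mult_axis: "(g :: complex^'n^'n) *v axis j 1 = (\<chi> r. g $ r $ j)"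
  by (simp add: vec_eq_iff matrix_vector_mult_def axis_def if_distrib cong: if_cong)

lemma norm_det_isometry:
  fixes g :: "complex^'n^'n"
  assumes dH: "det Hm \<noteq> 0" and pres: "\<forall>v w. hform Hm (g *v v) (g *v w) = hform Hm v w"
  shows "cmod (det g) = 1"
proof -
  define f where "f = (\<lambda>i. g *v axis i 1)"
  have E: "((\<chi> r c. f c $ r) :: complex^'n^'n) = g"
    by (simp add: f_def matrix_vector_mult_axis vec_eq_iff)
  have A: "((\<chi> i r. cnj (f i $ r)) :: complex^'n^'n) = transpose (\<chi> i j. cnj (g $ i $ j))"
    by (simp add: f_def matrix_vector_mult_axis vec_eq_iff transpose_def)
  have "(transpose (\<chi> i j. cnj (g $ i $ j)) ** Hm ** g) $ i $ j = Hm $ i $ j" for i j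
    using gram_matrix_eq_hform[of f Hm i j] unfolding E A by (simp add: f_def pres hform_axis)
  then have "transpose (\<chi> i j. cnj (g $ i $ j)) ** Hm ** g = Hm" by (simp add: vec_eq_iff)
  then have "cnj (det g) * det Hm * det g = det Hm"
    by (metis det_mul det_transpose det_map_cnj)
  then have "cnj (det g) * det g = 1" using dH
    by (metis mult.commute mult.left_commute mult_cancel_right1)
  then have "(cmod (det g))\<^sup>2 = 1" by (metis cnj_mult_self of_real_eq_1_iff)
  then show ?thesis using norm_ge_zero[of "det g"] by (auto simp: power2_eq_1_iff)
qed

definition frame_transfer ::
    "complex^'n^'n \<Rightarrow> 'n \<Rightarrow> ('n \<Rightarrow> complex^'n) \<Rightarrow> ('n \<Rightarrow> complex^'n) \<Rightarrow> complex^'n^'n" where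
  "frame_transfer Hm k F e = (\<chi> r c. \<Sum>i\<in>UNIV. lorentz_sign k i * e i $ r *
      (\<Sum>s\<in>UNIV. cnj (F i $ s) * Hm $ s $ c))"

lemma frame_transfer_mult:
  "frame_transfer Hm k F e *v w = (\<Sum>i\<in>UNIV. (lorentz_sign k i * hform Hm (F i) w) *s e i)"
proof -
  have "(frame_transfer Hm k F e *v w) $ r = (\<Sum>i\<in>UNIV. lorentz_sign k i * hform Hm (F i) w * e i $ r)"
    for r
  proof -
    have "(frame_transfer Hm k F e *v w) $ r = (\<Sum>c\<in>UNIV. \<Sum>i\<in>UNIV. \<Sum>s\<in>UNIV.
        lorentz_sign k i * e i $ r * (cnj (F i $ s) * Hm $ s $ c) * w $ c)"
      by (simp add: frame_transfer_def matrix_vector_mult_def sum_distrib_left sum_distrib_right)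
    also have "\<dots> = (\<Sum>i\<in>UNIV. \<Sum>c\<in>UNIV. \<Sum>s\<in>UNIV.
        lorentz_sign k i * e i $ r * (cnj (F i $ s) * Hm $ s $ c) * w $ c)"
      by (rule sum.swap)
    also have "\<dots> = (\<Sum>i\<in>UNIV. \<Sum>s\<in>UNIV. \<Sum>c\<in>UNIV.
        lorentz_sign k i * e i $ r * (cnj (F i $ s) * Hm $ s $ c) * w $ c)"
      by (intro sum.cong refl sum.swap)
    also have "\<dots> = (\<Sum>i\<in>UNIV. lorentz_sign k i * hform Hm (F i) w * e i $ r)"
      unfolding hform_def by (simp add: sum_distrib_left sum_distrib_right mult_ac)
    finally show ?thesis .
  qed
  then show ?thesis by (simp add: vec_eq_iff sum_component mult_ac)
qed

lemma isometry_between_lorentz_frames: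
  assumes fe: "lorentz_frame Hm k e" and fF: "lorentz_frame Hm k F"
  shows "\<forall>v w. hform Hm (frame_transfer Hm k F e *v v) (frame_transfer Hm k F e *v w) = hform Hm v w"
    "\<forall>i. frame_transfer Hm k F e *v F i = e i"
proof -
  have ce: "hform Hm (e j) (frame_transfer Hm k F e *v w) = hform Hm (F j) w" for j w
  proof -
    have "hform Hm (e j) (frame_transfer Hm k F e *v w)
        = (\<Sum>i\<in>UNIV. lorentz_sign k i * hform Hm (F i) w * hform Hm (e j) (e i))"
      by (simp add: frame_transfer_mult hform_sum_right hform_scale_right)
    also have "\<dots> = (\<Sum>i\<in>UNIV. if i = j then hform Hm (F j) w else 0)"
      by (intro sum.cong refl) (auto simp: lorentz_frame_hform[OF fe] mult_ac)
    finally show ?thesis by simp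
  qed
  have "hform Hm (frame_transfer Hm k F e *v v) (frame_transfer Hm k F e *v w) = hform Hm v w" for v w
    unfolding hform_lorentz_frame_expansion[OF fe, of "frame_transfer Hm k F e *v v"] ce
    by (rule hform_lorentz_frame_expansion[OF fF, symmetric])
  then show "\<forall>v w. hform Hm (frame_transfer Hm k F e *v v) (frame_transfer Hm k F e *v w) = hform Hm v w"
    by blast
  have "frame_transfer Hm k F e *v F j = (\<Sum>i\<in>UNIV. if i = j then e j else 0)" for j
    unfolding frame_transfer_mult by (intro sum.cong refl) (simp add: lorentz_frame_hform[OF fF])
  then show "\<forall>i. frame_transfer Hm k F e *v F i = e i" by simp
qed

text \<open>The isometry between two frames has determinant of modulus one; an n-th root of its inverse
  determinant corrects it into SU(h).\<close>

lemma SU_group_maps_lorentz_frame: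
  fixes Hm :: "complex^'n^'n"
  assumes fe: "lorentz_frame Hm k e" and fF: "lorentz_frame Hm k F"
  shows "\<exists>g\<in>SU_group Hm. \<exists>c. c \<noteq> 0 \<and> (\<forall>i. g *v F i = c *s e i)"
proof -
  define g where "g = frame_transfer Hm k F e"
  note pres = isometry_between_lorentz_frames(1)[OF fe fF, folded g_def]
    and gF = isometry_between_lorentz_frames(2)[OF fe fF, folded g_def]
  have ud: "cmod (det g) = 1"
    using norm_det_isometry[OF lorentz_frame_det_nonzero(2)[OF fe] pres] .
  then have d0: "det g \<noteq> 0" by auto
  define c where "c = exp (- Ln (det g) / of_nat CARD('n))"
  have "c ^ CARD('n) = exp (of_nat CARD('n) * (- Ln (det g) / of_nat CARD('n)))"
    unfolding c_def by (rule exp_of_nat_mult[symmetric])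
  also have "\<dots> = inverse (det g)" using d0 by (simp add: exp_minus)
  finally have cn: "c ^ CARD('n) = inverse (det g)" .
  have cm: "cnj c * c = 1" using ud d0 by (simp add: c_def cnj_mult_self)
  then have c0: "c \<noteq> 0" by auto
  define g' where "g' = mat c ** g"
  have "(mat c :: complex^'n^'n) *v x = c *s x" for x
    by (simp add: vec_eq_iff matrix_vector_mult_def mat_def if_distrib if_distribR cong: if_cong)
  then have g'v: "g' *v v = c *s (g *v v)" for v
    by (simp add: g'_def matrix_vector_mul_assoc[symmetric])
  have "det (mat c :: complex^'n^'n) = c ^ CARD('n)"
    by (subst det_diagonal) (auto simp: mat_def)
  then have "det g' = 1" using d0 by (simp add: g'_def det_mul cn)
  moreover have "hform Hm (g' *v v) (g' *v w) = hform Hm v w" for v w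
  proof -
    have "c * cnj c = 1" using cm by (simp add: mult.commute)
    then show ?thesis using pres by (simp add: g'v hform_simps mult.assoc[symmetric])
  qed
  ultimately have "g' \<in> SU_group Hm" by (simp add: SU_group_def)
  moreover have "\<forall>i. g' *v F i = c *s e i" by (simp add: g'v gF)
  ultimately show ?thesis using c0 by blast
qed

lemma obtain_two_other_indices:
  fixes k :: "'a::finite"
  assumes "CARD('a) \<ge> 3"
  obtains a b where "a \<noteq> k" "b \<noteq> k" "a \<noteq> b"
proof -
  have "{k} \<noteq> UNIV"
  proof
    assume "{k} = UNIV"
    then have "CARD('a) = card {k}" by simp
    then show False using assms by simp
  qed
  then obtain a where a: "a \<noteq> k" by blast
  have "{k, a} \<noteq> UNIV"
  proof
    assume "{k, a} = UNIV"
    then have "CARD('a) = card {k, a}" by simp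
    also have "\<dots> \<le> 2" by (simp add: card_insert_if)
    finally show False using assms by simp
  qed
  then obtain b where "b \<noteq> k" "b \<noteq> a" by blast
  then show thesis using that a by blast
qed

lemma SU_group_hform: "g \<in> SU_group Hm \<Longrightarrow> hform Hm (g *v v) (g *v w) = hform Hm v w"
  by (simp add: SU_group_def)

lemma SU_group_one: "mat 1 \<in> SU_group Hm"
  by (simp add: SU_group_def)

lemma SU_group_mult: "g \<in> SU_group Hm \<Longrightarrow> h \<in> SU_group Hm \<Longrightarrow> h ** g \<in> SU_group Hm"
  by (simp add: SU_group_def det_mul matrix_vector_mul_assoc[symmetric])

lemma SU_group_left_inverse:
  assumes g: "g \<in> SU_group Hm"
  shows "\<exists>h\<in>SU_group Hm. h ** g = mat 1"
proof -
  have dg: "det g = 1" using g by (simp add: SU_group_def)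
  then have "invertible g" by (simp add: invertible_det_nz)
  then obtain h where hg: "h ** g = mat 1" using invertible_left_inverse by blast
  then have gh: "g ** h = mat 1" using matrix_left_right_inverse by blast
  have "det h * det g = 1" using hg by (metis det_I det_mul)
  then have "det h = 1" using dg by simp
  moreover have "hform Hm (h *v v) (h *v w) = hform Hm v w" for v w
    using SU_group_hform[OF g, of "h *v v" "h *v w"] by (simp add: matrix_vector_mul_assoc gh)
  ultimately show ?thesis using hg by (auto simp: SU_group_def)
qed

lemma cline_self: "v \<in> cline v"
  unfolding cline_def by (rule image_eqI[of _ _ 1]) auto

lemma cline_eq_iff:
  assumes "v \<noteq> 0"
  shows "cline v = cline w \<longleftrightarrow> (\<exists>c. c \<noteq> 0 \<and> w = c *s v)"
proof
  assume h: "cline v = cline w"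
  then obtain c where c: "w = c *s v" using cline_self[of w] unfolding cline_def by auto
  obtain d where "v = d *s w" using h cline_self[of v] unfolding cline_def by auto
  then have "c \<noteq> 0" using c assms by auto
  then show "\<exists>c. c \<noteq> 0 \<and> w = c *s v" using c by blast
next
  assume "\<exists>c. c \<noteq> 0 \<and> w = c *s v"
  then obtain c where c: "c \<noteq> 0" "w = c *s v" by blast
  have "d *s v = (d / c) *s w" "d *s w = (d * c) *s v" for d
    using c by (simp_all add: vec_eq_iff)
  then show "cline v = cline w" unfolding cline_def by blast
qed

lemma cline_scale:
  assumes "c \<noteq> 0"
  shows "cline (c *s v) = cline v"
proof (cases "v = 0")
  case False
  then show ?thesis using cline_eq_iff[OF False, of "c *s v"] assms by metis
qed simp

lemma image_cline: "(\<lambda>v. (g :: complex^'n^'n) *v v) ` cline w = cline (g *v w)"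
  unfolding cline_def by (auto simp: vector_scalar_commute image_iff)

lemma gen_cline:
  assumes "v \<noteq> 0"
  shows "\<exists>c. c \<noteq> 0 \<and> gen (cline v) = c *s v"
proof -
  have "\<exists>w. w \<in> cline v \<and> w \<noteq> 0" using cline_self assms by blast
  then have g: "gen (cline v) \<in> cline v" "gen (cline v) \<noteq> 0"
    unfolding gen_def by (metis (mono_tags, lifting) someI_ex)+
  then obtain c where "gen (cline v) = c *s v" unfolding cline_def by auto
  with g(2) show ?thesis by (intro exI[of _ c]) auto
qed

lemma cline_neq_if_hform_nonzero:
  assumes "v \<noteq> 0" "hform Hm v v = 0" "hform Hm v w \<noteq> 0"
  shows "cline v \<noteq> cline w"
  using assms cline_eq_iff[OF assms(1)] by (auto simp: hform_simps)

lemma cline_triple_in_Xss: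
  assumes "v1 \<noteq> 0" "v2 \<noteq> 0" "v3 \<noteq> 0"
    and "hform Hm v1 v1 = 0" "hform Hm v2 v2 = 0" "hform Hm v3 v3 = 0"
    and "hform Hm v1 v2 \<noteq> 0" "hform Hm v1 v3 \<noteq> 0" "hform Hm v2 v3 \<noteq> 0"
  shows "(cline v1, cline v2, cline v3) \<in> Xss Hm"
  unfolding Xss_def isotropic_line_def
  using assms cline_neq_if_hform_nonzero[of v1 Hm] cline_neq_if_hform_nonzero[of v2 Hm] by blast

definition triple_product :: "complex^'n^'n \<Rightarrow> complex^'n \<Rightarrow> complex^'n \<Rightarrow> complex^'n \<Rightarrow> complex" where
  "triple_product Hm v1 v2 v3 = hform Hm v1 v3 * hform Hm v3 v2 * hform Hm v2 v1"

lemma triple_product_scale: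
  "triple_product Hm (c1 *s v1) (c2 *s v2) (c3 *s v3)
    = complex_of_real ((cmod c1)\<^sup>2 * (cmod c2)\<^sup>2 * (cmod c3)\<^sup>2) * triple_product Hm v1 v2 v3"
proof -
  have "triple_product Hm (c1 *s v1) (c2 *s v2) (c3 *s v3)
      = (cnj c1 * c1) * (cnj c2 * c2) * (cnj c3 * c3) * triple_product Hm v1 v2 v3"
    by (simp add: triple_product_def hform_simps mult_ac)
  then show ?thesis by (simp add: cnj_mult_self)
qed

lemma sgn_triple_product_scale:
  assumes "c1 \<noteq> 0" "c2 \<noteq> 0" "c3 \<noteq> 0"
  shows "sgn (triple_product Hm (c1 *s v1) (c2 *s v2) (c3 *s v3)) = sgn (triple_product Hm v1 v2 v3)"
proof -
  have "sgn (complex_of_real ((cmod c1)\<^sup>2 * (cmod c2)\<^sup>2 * (cmod c3)\<^sup>2)) = 1"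
    using assms by (subst sgn_of_real) simp
  then show ?thesis by (simp only: triple_product_scale sgn_mult mult_1_left)
qed

lemma pinv_eq_sgn_gen: "pinv Hm (L1, L2, L3) = sgn (triple_product Hm (gen L1) (gen L2) (gen L3))"
  unfolding pinv_def triple_product_def sgn_eq Let_def by simp

lemma pinv_cline_triple:
  assumes "v1 \<noteq> 0" "v2 \<noteq> 0" "v3 \<noteq> 0"
  shows "pinv Hm (cline v1, cline v2, cline v3) = sgn (triple_product Hm v1 v2 v3)"
proof -
  obtain c1 c2 c3 where "c1 \<noteq> 0" "gen (cline v1) = c1 *s v1" "c2 \<noteq> 0" "gen (cline v2) = c2 *s v2"
    "c3 \<noteq> 0" "gen (cline v3) = c3 *s v3" using gen_cline assms by metis
  then show ?thesis by (simp add: pinv_eq_sgn_gen sgn_triple_product_scale)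
qed

lemma act_triple_cline:
  "act_triple g (cline v1, cline v2, cline v3) = (cline (g *v v1), cline (g *v v2), cline (g *v v3))"
  by (simp add: act_triple_def image_cline)

lemma act_triple_one: "act_triple (mat 1) x = x"
  by (cases x) (simp add: act_triple_def)

lemma act_triple_mult: "act_triple h (act_triple g x) = act_triple (h ** g) x"
  by (cases x) (simp add: act_triple_def image_image matrix_vector_mul_assoc)

locale lorentzian =
  fixes Hm :: "complex^'n^'n" and e :: "'n \<Rightarrow> complex^'n" and k :: 'n
  assumes hermitian: "hermitian_matrix Hm" and frame: "lorentz_frame Hm k e"
begin

lemma Xss_generators:
  assumes "x \<in> Xss Hm"
  obtains v1 v2 v3 where "x = (cline v1, cline v2, cline v3)" "v1 \<noteq> 0" "v2 \<noteq> 0" "v3 \<noteq> 0"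
    "hform Hm v1 v1 = 0" "hform Hm v2 v2 = 0" "hform Hm v3 v3 = 0"
    "hform Hm v1 v2 \<noteq> 0" "hform Hm v1 v3 \<noteq> 0" "hform Hm v2 v3 \<noteq> 0"
proof -
  have nz: "hform Hm v w \<noteq> 0" if vw: "v \<noteq> 0" "w \<noteq> 0" "hform Hm v v = 0" "hform Hm w w = 0"
    "cline v \<noteq> cline w" for v w
  proof
    assume "hform Hm v w = 0"
    then obtain c where c: "w = c *s v"
      using isotropic_orthogonal_proportional[OF frame hermitian vw(1,3,4)] by blast
    then have "c \<noteq> 0" using vw(2) by auto
    then show False using c cline_scale vw(5) by metis
  qed
  obtain L1 L2 L3 where X: "x = (L1, L2, L3)" "isotropic_line Hm L1" "isotropic_line Hm L2"
    "isotropic_line Hm L3" "L1 \<noteq> L2" "L1 \<noteq> L3" "L2 \<noteq> L3"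
    using assms unfolding Xss_def by auto
  obtain v1 where V1: "v1 \<noteq> 0" "hform Hm v1 v1 = 0" "L1 = cline v1"
    using X(2) unfolding isotropic_line_def by blast
  obtain v2 where V2: "v2 \<noteq> 0" "hform Hm v2 v2 = 0" "L2 = cline v2"
    using X(3) unfolding isotropic_line_def by blast
  obtain v3 where V3: "v3 \<noteq> 0" "hform Hm v3 v3 = 0" "L3 = cline v3"
    using X(4) unfolding isotropic_line_def by blast
  show thesis
    by (rule that[of v1 v2 v3]) (use X V1 V2 V3 nz[of v1 v2] nz[of v1 v3] nz[of v2 v3] in simp_all)
qed

lemma act_triple_Xss:
  assumes "x \<in> Xss Hm" "g \<in> SU_group Hm"
  shows "act_triple g x \<in> Xss Hm" "pinv Hm (act_triple g x) = pinv Hm x"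
proof -
  obtain v1 v2 v3 where V: "x = (cline v1, cline v2, cline v3)" "v1 \<noteq> 0" "v2 \<noteq> 0" "v3 \<noteq> 0"
    "hform Hm v1 v1 = 0" "hform Hm v2 v2 = 0" "hform Hm v3 v3 = 0"
    "hform Hm v1 v2 \<noteq> 0" "hform Hm v1 v3 \<noteq> 0" "hform Hm v2 v3 \<noteq> 0"
    using Xss_generators assms(1) by blast
  have nz: "g *v v1 \<noteq> 0" "g *v v2 \<noteq> 0" "g *v v3 \<noteq> 0"
    using V(8-10) SU_group_hform[OF assms(2)] by (metis hform_zero_left hform_zero_right)+
  show "act_triple g x \<in> Xss Hm"
    unfolding V(1) act_triple_cline using V nz
    by (intro cline_triple_in_Xss) (simp_all add: SU_group_hform[OF assms(2)])
  show "pinv Hm (act_triple g x) = pinv Hm x"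
    unfolding V(1) act_triple_cline pinv_cline_triple[OF V(2-4)] pinv_cline_triple[OF nz]
    by (simp add: triple_product_def SU_group_hform[OF assms(2)])
qed

end

section \<open>The normal form of a semi-stable triple\<close>

definition frame_comb :: "('n \<Rightarrow> complex^'n) \<Rightarrow> 'n \<Rightarrow> 'n \<Rightarrow> 'n \<Rightarrow> complex \<Rightarrow> complex \<Rightarrow> complex
    \<Rightarrow> complex^'n" where
  "frame_comb F k a b x1 x2 x3 = x1 *s F k + x2 *s F a + x3 *s F b"

lemma hform_frame_comb:
  assumes "lorentz_frame Hm k F" and "a \<noteq> k" "b \<noteq> k" "a \<noteq> b"
  shows "hform Hm (frame_comb F k a b x1 x2 x3) (frame_comb F k a b y1 y2 y3)
    = - cnj x1 * y1 + cnj x2 * y2 + cnj x3 * y3"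
  using assms by (simp add: frame_comb_def hform_simps lorentz_frame_hform lorentz_sign_def)

lemma matrix_vector_mult_frame_comb:
  assumes "\<forall>i. g *v F i = c *s e i"
  shows "(g :: complex^'n^'n) *v frame_comb F k a b x1 x2 x3 = c *s frame_comb e k a b x1 x2 x3"
  using assms
  by (simp add: frame_comb_def matrix_vector_right_distrib vector_scalar_commute vec_eq_iff algebra_simps)

definition inv_sqrt2 :: complex where
  "inv_sqrt2 = complex_of_real (1 / sqrt 2)"

lemma inv_sqrt2_simps: "cnj inv_sqrt2 = inv_sqrt2" "inv_sqrt2 * inv_sqrt2 = 1/2"
  "cnj inv_sqrt2 * inv_sqrt2 = 1/2" "inv_sqrt2 * (inv_sqrt2 * x) = x / 2"
  "cnj inv_sqrt2 * (inv_sqrt2 * x) = x / 2"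
  by (simp_all add: inv_sqrt2_def mult.assoc[symmetric] flip: of_real_mult)

definition std_vectors :: "('n \<Rightarrow> complex^'n) \<Rightarrow> 'n \<Rightarrow> 'n \<Rightarrow> 'n \<Rightarrow> complex \<Rightarrow>
     (complex^'n) \<times> (complex^'n) \<times> (complex^'n)" where
  "std_vectors F k a b p = (frame_comb F k a b inv_sqrt2 inv_sqrt2 0,
     frame_comb F k a b inv_sqrt2 (- inv_sqrt2) 0,
     frame_comb F k a b (inv_sqrt2 * (1 - cnj p)) (inv_sqrt2 * (- 1 - cnj p))
       (complex_of_real (sqrt (-2 * Re p))))"

definition std_triple where
  "std_triple F k a b p = (case std_vectors F k a b p of (v1, v2, v3) \<Rightarrow> (cline v1, cline v2, cline v3))"

lemma hform_std_vectors:
  assumes "lorentz_frame Hm k F" and d: "a \<noteq> k" "b \<noteq> k" "a \<noteq> b" and p: "Re p \<le> 0"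
    and sv: "std_vectors F k a b p = (v1, v2, v3)"
  shows "hform Hm v1 v1 = 0" "hform Hm v2 v2 = 0" "hform Hm v3 v3 = 0"
    "hform Hm v1 v2 = -1" "hform Hm v1 v3 = -1" "hform Hm v2 v3 = cnj p"
    "hform Hm v2 v1 = -1" "hform Hm v3 v1 = -1" "hform Hm v3 v2 = p"
proof -
  define \<sigma> where "\<sigma> = sqrt (-2 * Re p)"
  have \<sigma>: "\<sigma> * \<sigma> = -2 * Re p" using p by (simp add: \<sigma>_def)
  have V: "v1 = frame_comb F k a b inv_sqrt2 inv_sqrt2 0"
    "v2 = frame_comb F k a b inv_sqrt2 (- inv_sqrt2) 0"
    "v3 = frame_comb F k a b (inv_sqrt2 * (1 - cnj p)) (inv_sqrt2 * (- 1 - cnj p)) (complex_of_real \<sigma>)"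
    using sv unfolding std_vectors_def \<sigma>_def by auto
  note h = hform_frame_comb[OF assms(1) d]
  note r = inv_sqrt2_simps(1,2)
  show "hform Hm v1 v1 = 0" "hform Hm v2 v2 = 0" "hform Hm v1 v2 = -1" "hform Hm v2 v1 = -1"
    unfolding V h by (simp_all add: r)
  show "hform Hm v1 v3 = -1" unfolding V h by (simp add: r algebra_simps mult.assoc[symmetric])
  show "hform Hm v3 v1 = -1" unfolding V h by (simp add: r algebra_simps mult.assoc[symmetric])
  show "hform Hm v2 v3 = cnj p" unfolding V h by (simp add: r algebra_simps mult.assoc[symmetric])
  show "hform Hm v3 v2 = p" unfolding V h by (simp add: r algebra_simps mult.assoc[symmetric])
  have rm: "cnj (inv_sqrt2 * z) * (inv_sqrt2 * w) = 1/2 * (cnj z * w)" for z w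
    by (metis r complex_cnj_mult mult.assoc mult.left_commute)
  have rm2: "cnj inv_sqrt2 * z * (inv_sqrt2 * w) = 1/2 * (z * w)" for z w
    by (metis r mult.assoc mult.left_commute)
  have "hform Hm v3 v3 = 1/2 * (- (cnj (1 - cnj p) * (1 - cnj p)) + cnj (- 1 - cnj p) * (- 1 - cnj p))
      + complex_of_real (\<sigma> * \<sigma>)"
    unfolding V h by (simp add: rm rm2)
  also have "\<dots> = 0"
    unfolding \<sigma> by (simp add: complex_eq_iff algebra_simps)
  finally show "hform Hm v3 v3 = 0" .
qed

lemma std_triple_in_Xss:
  assumes "lorentz_frame Hm k F" "a \<noteq> k" "b \<noteq> k" "a \<noteq> b" and p: "p \<in> Hset"
  shows "std_triple F k a b p \<in> Xss Hm" "pinv Hm (std_triple F k a b p) = p"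
proof -
  obtain v1 v2 v3 where sv: "std_vectors F k a b p = (v1, v2, v3)" by (metis prod_cases3)
  have p': "Re p \<le> 0" "cmod p = 1" using p by (auto simp: Hset_def)
  note h = hform_std_vectors[OF assms(1-4) p'(1) sv]
  have nz: "v1 \<noteq> 0" "v2 \<noteq> 0" "v3 \<noteq> 0" using h(4,6) p'(2) by auto
  have st: "std_triple F k a b p = (cline v1, cline v2, cline v3)" by (simp add: std_triple_def sv)
  show "std_triple F k a b p \<in> Xss Hm"
    unfolding st using nz h p'(2) by (intro cline_triple_in_Xss) auto
  show "pinv Hm (std_triple F k a b p) = p"
    unfolding st pinv_cline_triple[OF nz] triple_product_def h using p'(2) by (simp add: sgn_div_norm)
qed

lemma act_std_triple:
  assumes "\<forall>i. g *v F i = c *s e i" "c \<noteq> 0"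
  shows "act_triple g (std_triple F k a b p) = std_triple e k a b p"
  by (simp add: std_triple_def std_vectors_def act_triple_cline
      matrix_vector_mult_frame_comb[OF assms(1)] cline_scale[OF assms(2)])

locale lorentzian_std = lorentzian +
  fixes a b :: "'n::finite"
  assumes std_indices: "a \<noteq> k" "b \<noteq> k" "a \<noteq> b"
begin

lemma Xss_normalized_generators:
  assumes "x \<in> Xss Hm"
  obtains W1 W2 W3 where "x = (cline W1, cline W2, cline W3)" "W1 \<noteq> 0" "W2 \<noteq> 0" "W3 \<noteq> 0"
    "hform Hm W1 W1 = 0" "hform Hm W2 W2 = 0" "hform Hm W3 W3 = 0"
    "hform Hm W1 W2 = -1" "hform Hm W1 W3 = -1" "cmod (hform Hm W2 W3) = 1"
proof -
  obtain v1 v2 v3 where V: "x = (cline v1, cline v2, cline v3)" "v1 \<noteq> 0" "v2 \<noteq> 0" "v3 \<noteq> 0"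
    "hform Hm v1 v1 = 0" "hform Hm v2 v2 = 0" "hform Hm v3 v3 = 0"
    "hform Hm v1 v2 \<noteq> 0" "hform Hm v1 v3 \<noteq> 0" "hform Hm v2 v3 \<noteq> 0"
    using Xss_generators assms by blast
  define A where "A = hform Hm v1 v2"
  define B where "B = hform Hm v1 v3"
  define C where "C = hform Hm v2 v3"
  have ABC: "A \<noteq> 0" "B \<noteq> 0" "C \<noteq> 0" using V by (auto simp: A_def B_def C_def)
  define c where "c = C / (cnj A * B)"
  have c: "c \<noteq> 0" using ABC by (simp add: c_def)
  define \<rho> where "\<rho> = sqrt (cmod c)"
  have \<rho>: "\<rho> > 0" "\<rho> * \<rho> = cmod c" using c by (auto simp: \<rho>_def)
  define W1 where "W1 = complex_of_real \<rho> *s v1"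
  define W2 where "W2 = (-1 / (A * complex_of_real \<rho>)) *s v2"
  define W3 where "W3 = (-1 / (B * complex_of_real \<rho>)) *s v3"
  have sc: "complex_of_real \<rho> \<noteq> 0" "-1 / (A * complex_of_real \<rho>) \<noteq> 0" "-1 / (B * complex_of_real \<rho>) \<noteq> 0"
    using \<rho> ABC by auto
  have "hform Hm W2 W3 = C / (cnj A * B * (complex_of_real \<rho> * complex_of_real \<rho>))"
    using ABC \<rho>(1) by (simp add: W2_def W3_def hform_simps C_def[symmetric] field_simps)
  also have "\<dots> = c / complex_of_real (cmod c)" using \<rho>(2) by (simp add: c_def flip: of_real_mult)
  finally have "cmod (hform Hm W2 W3) = 1" using c by (simp add: norm_divide)
  moreover have "x = (cline W1, cline W2, cline W3)"
    unfolding V(1) W1_def W2_def W3_def using sc cline_scale by metis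
  moreover have "W1 \<noteq> 0" "W2 \<noteq> 0" "W3 \<noteq> 0"
    using sc V(2-4) by (auto simp: W1_def W2_def W3_def vec_eq_iff)
  moreover have "hform Hm W1 W1 = 0" "hform Hm W2 W2 = 0" "hform Hm W3 W3 = 0"
    using V(5-7) by (simp_all add: W1_def W2_def W3_def hform_simps)
  moreover have "hform Hm W1 W2 = -1" "hform Hm W1 W3 = -1"
    using ABC \<rho> by (simp_all add: W1_def W2_def W3_def hform_simps A_def[symmetric] B_def[symmetric])
  ultimately show thesis using that by blast
qed

lemma normalized_triple_std_vectors:
  assumes W: "hform Hm W1 W1 = 0" "hform Hm W2 W2 = 0" "hform Hm W3 W3 = 0"
    "hform Hm W1 W2 = -1" "hform Hm W1 W3 = -1" "hform Hm W2 W3 = cnj p"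
  shows "Re p \<le> 0" "\<exists>F. lorentz_frame Hm k F \<and> std_vectors F k a b p = (W1, W2, W3)"
proof -
  have W': "hform Hm W2 W1 = -1" "hform Hm W3 W1 = -1" "hform Hm W3 W2 = p"
    using W(4-6) hform_conj_sym[OF hermitian] by (metis complex_cnj_cnj complex_cnj_minus complex_cnj_one)+
  define Fk where "Fk = inv_sqrt2 *s (W1 + W2)"
  define Fa where "Fa = inv_sqrt2 *s (W1 - W2)"
  define z where "z = W3 + cnj p *s W1 - W2"
  have hF: "hform Hm Fk Fk = -1" "hform Hm Fa Fa = 1" "hform Hm Fk Fa = 0"
    unfolding Fk_def Fa_def by (simp_all add: hform_simps W W' inv_sqrt2_simps)
  have hz1: "hform Hm W1 z = 0" "hform Hm W2 z = 0" unfolding z_def by (simp_all add: hform_simps W W')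
  then have hz: "hform Hm Fk z = 0" "hform Hm Fa z = 0"
    unfolding Fk_def Fa_def by (simp_all add: hform_simps)
  have "hform Hm z z = hform Hm W3 z"
    by (subst (1) z_def) (simp add: hform_simps hz1)
  also have "\<dots> = complex_of_real (- 2 * Re p)"
    unfolding z_def by (simp add: hform_simps W W' complex_eq_iff)
  finally have hzz: "hform Hm z z = complex_of_real (- 2 * Re p)" .
  show Rep: "Re p \<le> 0"
    using hform_pos_orthogonal_timelike[OF frame hermitian hF(1) hz(1), of] hzz
    by (cases "z = 0") auto
  define \<sigma> where "\<sigma> = sqrt (- 2 * Re p)"
  have \<sigma>: "\<sigma> \<ge> 0" "hform Hm z z = complex_of_real (\<sigma> * \<sigma>)"
    using Rep by (simp_all add: hzz \<sigma>_def)
  obtain F where F: "lorentz_frame Hm k F" "F k = Fk" "F a = Fa" "z = complex_of_real \<sigma> *s F b"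
    using lorentz_frame_through[OF hermitian frame std_indices hF hz \<sigma>(2,1)] by blast
  have W12: "W1 = frame_comb F k a b inv_sqrt2 inv_sqrt2 0" "W2 = frame_comb F k a b inv_sqrt2 (- inv_sqrt2) 0"
    unfolding frame_comb_def F(2,3) Fk_def Fa_def by (simp_all add: vec_eq_iff inv_sqrt2_simps algebra_simps)
  have "W3 = z - cnj p *s W1 + W2" by (simp add: z_def)
  also have "\<dots> = frame_comb F k a b (inv_sqrt2 * (1 - cnj p)) (inv_sqrt2 * (- 1 - cnj p)) (complex_of_real \<sigma>)"
    unfolding F(4) W12 frame_comb_def by (simp add: vec_eq_iff algebra_simps)
  finally show "\<exists>F. lorentz_frame Hm k F \<and> std_vectors F k a b p = (W1, W2, W3)"
    using F(1) W12 by (auto simp: std_vectors_def \<sigma>_def)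
qed

lemma Xss_normal_form:
  assumes x: "x \<in> Xss Hm"
  shows "pinv Hm x \<in> Hset" "\<exists>g\<in>SU_group Hm. act_triple g x = std_triple e k a b (pinv Hm x)"
proof -
  obtain W1 W2 W3 where W: "x = (cline W1, cline W2, cline W3)" "W1 \<noteq> 0" "W2 \<noteq> 0" "W3 \<noteq> 0"
    "hform Hm W1 W1 = 0" "hform Hm W2 W2 = 0" "hform Hm W3 W3 = 0"
    "hform Hm W1 W2 = -1" "hform Hm W1 W3 = -1" "cmod (hform Hm W2 W3) = 1"
    using Xss_normalized_generators x by blast
  define p where "p = cnj (hform Hm W2 W3)"
  have p: "hform Hm W2 W3 = cnj p" "cmod p = 1" using W(10) by (simp_all add: p_def)
  have "pinv Hm x = p"
    using W(8,9) p hform_conj_sym[OF hermitian, of W3 W2] hform_conj_sym[OF hermitian, of W2 W1]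
    by (simp add: W(1) pinv_cline_triple[OF W(2-4)] triple_product_def sgn_div_norm)
  moreover note std = normalized_triple_std_vectors[OF W(5-9) p(1)]
  ultimately show pH: "pinv Hm x \<in> Hset" using p(2) by (simp add: Hset_def)
  obtain F where F: "lorentz_frame Hm k F" "std_vectors F k a b p = (W1, W2, W3)" using std by blast
  obtain g c where g: "g \<in> SU_group Hm" "c \<noteq> 0" "\<forall>i. g *v F i = c *s e i"
    using SU_group_maps_lorentz_frame[OF frame F(1)] by blast
  have "x = std_triple F k a b p" by (simp add: W(1) std_triple_def F(2))
  then have "act_triple g x = std_triple e k a b p" using act_std_triple[OF g(3,2)] by simp
  then show "\<exists>g\<in>SU_group Hm. act_triple g x = std_triple e k a b (pinv Hm x)"
    using g(1) \<open>pinv Hm x = p\<close> by auto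
qed

end

section \<open>Quotient topologies\<close>

lemma openin_quotient_topology:
  "openin (quotient_topology X f Y) U \<longleftrightarrow> U \<subseteq> Y \<and> openin X {x \<in> topspace X. f x \<in> U}"
proof -
  have inter: "S \<inter> T \<subseteq> Y \<and> openin X {x \<in> topspace X. f x \<in> S \<inter> T}"
    if "S \<subseteq> Y \<and> openin X {x \<in> topspace X. f x \<in> S}"
      "T \<subseteq> Y \<and> openin X {x \<in> topspace X. f x \<in> T}" for S T
  proof -
    have "{x \<in> topspace X. f x \<in> S \<inter> T}
        = {x \<in> topspace X. f x \<in> S} \<inter> {x \<in> topspace X. f x \<in> T}" by auto
    then show ?thesis using that by auto
  qed
  have union: "\<Union>K \<subseteq> Y \<and> openin X {x \<in> topspace X. f x \<in> \<Union>K}"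
    if "\<forall>S\<in>K. S \<subseteq> Y \<and> openin X {x \<in> topspace X. f x \<in> S}" for K
  proof -
    have "{x \<in> topspace X. f x \<in> \<Union>K} = (\<Union>S\<in>K. {x \<in> topspace X. f x \<in> S})" by auto
    then show ?thesis using that by auto
  qed
  have "istopology (\<lambda>U. U \<subseteq> Y \<and> openin X {x \<in> topspace X. f x \<in> U})"
    unfolding istopology_def using inter union by blast
  then show ?thesis unfolding quotient_topology_def by simp
qed

lemma topspace_quotient_topology:
  assumes "f ` topspace X \<subseteq> Y"
  shows "topspace (quotient_topology X f Y) = Y"
proof -
  have "{x \<in> topspace X. f x \<in> Y} = topspace X" using assms by auto
  then have "openin (quotient_topology X f Y) Y" unfolding openin_quotient_topology by simp
  then have "Y \<subseteq> topspace (quotient_topology X f Y)" by (rule openin_subset)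
  moreover have "topspace (quotient_topology X f Y) \<subseteq> Y"
    using openin_quotient_topology[of X f Y "topspace (quotient_topology X f Y)"] by simp
  ultimately show ?thesis by blast
qed

lemma continuous_map_quotient_topology_induced:
  assumes p: "continuous_map X Y p" and qQ: "q ` topspace X \<subseteq> Q" and fY: "f ` Q \<subseteq> topspace Y"
    and fq: "\<And>x. x \<in> topspace X \<Longrightarrow> f (q x) = p x"
  shows "continuous_map (quotient_topology X q Q) Y f"
  unfolding continuous_map_def
proof (intro conjI allI impI)
  have top: "topspace (quotient_topology X q Q) = Q" using qQ by (rule topspace_quotient_topology)
  then show "f \<in> topspace (quotient_topology X q Q) \<rightarrow> topspace Y" using fY by auto
  fix U assume "openin Y U"
  then have "openin X {x \<in> topspace X. p x \<in> U}" by (rule openin_continuous_map_preimage[OF p])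
  moreover have "{x \<in> topspace X. q x \<in> {C \<in> Q. f C \<in> U}} = {x \<in> topspace X. p x \<in> U}"
    using qQ fq by auto
  ultimately show "openin (quotient_topology X q Q) {C \<in> topspace (quotient_topology X q Q). f C \<in> U}"
    unfolding openin_quotient_topology top by auto
qed

text \<open>The image of an open set U of the quotient is the preimage under the section s of the
  (open) saturation of U.\<close>

lemma open_map_quotient_topology_section:
  assumes s: "continuous_map Y X s" and Q: "q ` topspace X = Q"
    and fq: "\<And>x. x \<in> topspace X \<Longrightarrow> f (q x) = p x"
    and ps: "\<And>y. y \<in> topspace Y \<Longrightarrow> p (s y) = y"
    and pY: "\<And>x. x \<in> topspace X \<Longrightarrow> p x \<in> topspace Y"
    and fibres: "\<And>x x'. x \<in> topspace X \<Longrightarrow> x' \<in> topspace X \<Longrightarrow> q x = q x' \<longleftrightarrow> p x = p x'"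
  shows "open_map (quotient_topology X q Q) Y f"
  unfolding open_map_def
proof (intro allI impI)
  have sX: "s y \<in> topspace X" if "y \<in> topspace Y" for y
    using continuous_map_image_subset_topspace[OF s] that by blast
  fix U assume "openin (quotient_topology X q Q) U"
  then have U: "U \<subseteq> Q" "openin X {x \<in> topspace X. q x \<in> U}"
    unfolding openin_quotient_topology by auto
  have "f ` U = {y \<in> topspace Y. s y \<in> {x \<in> topspace X. q x \<in> U}}"
  proof (intro set_eqI iffI)
    fix y assume "y \<in> f ` U"
    then obtain C where C: "C \<in> U" "y = f C" by blast
    then obtain x where x: "x \<in> topspace X" "C = q x" using U(1) Q by blast
    then have y: "y = p x" "y \<in> topspace Y" using C fq pY by auto
    then have "q (s y) = q x" using fibres[OF sX[OF y(2)] x(1)] ps by simp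
    then show "y \<in> {y \<in> topspace Y. s y \<in> {x \<in> topspace X. q x \<in> U}}"
      using x C y sX by auto
  next
    fix y assume "y \<in> {y \<in> topspace Y. s y \<in> {x \<in> topspace X. q x \<in> U}}"
    then have y: "y \<in> topspace Y" "s y \<in> topspace X" "q (s y) \<in> U" by auto
    then have "f (q (s y)) = y" using fq ps by simp
    then show "y \<in> f ` U" using y(3) by (metis imageI)
  qed
  then show "openin Y (f ` U)" using openin_continuous_map_preimage[OF s U(2)] by simp
qed

lemma homeomorphic_map_quotient_same_fibres:
  assumes p: "continuous_map X Y p" and s: "continuous_map Y X s"
    and ps: "\<And>y. y \<in> topspace Y \<Longrightarrow> p (s y) = y"
    and fibres: "\<And>x x'. x \<in> topspace X \<Longrightarrow> x' \<in> topspace X \<Longrightarrow> q x = q x' \<longleftrightarrow> p x = p x'"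
    and Q: "q ` topspace X = Q"
  shows "\<exists>f. (\<forall>x \<in> topspace X. f (q x) = p x) \<and> homeomorphic_map (quotient_topology X q Q) Y f"
proof -
  define f where "f = (\<lambda>C. p (SOME x. x \<in> topspace X \<and> q x = C))"
  have fq: "f (q x) = p x" if x: "x \<in> topspace X" for x
  proof -
    have "(SOME x'. x' \<in> topspace X \<and> q x' = q x) \<in> topspace X \<and> q (SOME x'. x' \<in> topspace X \<and> q x' = q x) = q x"
      by (rule someI[of _ x]) (use x in simp)
    then have "p (SOME x'. x' \<in> topspace X \<and> q x' = q x) = p x" using fibres x by blast
    then show ?thesis by (simp add: f_def)
  qed
  have pY: "p x \<in> topspace Y" if "x \<in> topspace X" for x
    using continuous_map_image_subset_topspace[OF p] that by blast
  have sX: "s y \<in> topspace X" if "y \<in> topspace Y" for y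
    using continuous_map_image_subset_topspace[OF s] that by blast
  have img: "f ` Q = topspace Y"
  proof
    show "f ` Q \<subseteq> topspace Y" using Q fq pY by auto
    show "topspace Y \<subseteq> f ` Q"
    proof
      fix y assume y: "y \<in> topspace Y"
      then have "f (q (s y)) = y" using fq sX ps by simp
      moreover have "q (s y) \<in> Q" using Q sX y by blast
      ultimately show "y \<in> f ` Q" by (metis imageI)
    qed
  qed
  have "inj_on f Q"
  proof (rule inj_onI)
    fix C D assume CD: "C \<in> Q" "D \<in> Q" "f C = f D"
    then obtain x x' where "x \<in> topspace X" "x' \<in> topspace X" "C = q x" "D = q x'" using Q by blast
    with CD(3) show "C = D" using fq fibres by simp
  qed
  moreover have "continuous_map (quotient_topology X q Q) Y f"
    using p Q img fq by (intro continuous_map_quotient_topology_induced) auto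
  moreover have "open_map (quotient_topology X q Q) Y f"
    using s Q fq ps pY fibres by (rule open_map_quotient_topology_section)
  moreover have "topspace (quotient_topology X q Q) = Q"
    using Q by (intro topspace_quotient_topology) auto
  ultimately have "homeomorphic_map (quotient_topology X q Q) Y f"
    using img by (intro bijective_open_imp_homeomorphic_map) auto
  then show ?thesis using fq by blast
qed

section \<open>Topology of the space of triples\<close>

lemma topspace_proj_top: "topspace proj_top = proj_space"
  unfolding proj_top_def by (rule topspace_quotient_topology) (auto simp: proj_space_def)

lemma openin_proj_top:
  "openin proj_top U \<longleftrightarrow> U \<subseteq> proj_space \<and> open {v. v \<noteq> 0 \<and> cline v \<in> U}"
proof -
  have "open (UNIV - {0::complex^'n})" by (simp add: open_Diff)
  then have "openin (top_of_set (UNIV - {0})) {v. v \<noteq> 0 \<and> cline v \<in> U} \<longleftrightarrow> open {v. v \<noteq> 0 \<and> cline v \<in> U}"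
    using openin_open_eq by blast
  moreover have "{x \<in> topspace (top_of_set (UNIV - {0})). cline x \<in> U} = {v. v \<noteq> 0 \<and> cline v \<in> U}"
    by auto
  ultimately show ?thesis unfolding proj_top_def openin_quotient_topology by simp
qed

lemma continuous_map_cline: "continuous_map (top_of_set (UNIV - {0})) proj_top cline"
  unfolding continuous_map_def topspace_proj_top
  by (auto simp: proj_space_def proj_top_def openin_quotient_topology)

lemma continuous_on_vector_scalar_mult [continuous_intros]:
  "continuous_on S c \<Longrightarrow> continuous_on S (\<lambda>p. c p *s (v :: complex^'n))"
proof -
  assume c: "continuous_on S c"
  have "(\<lambda>p. c p *s v) = (\<lambda>p. \<chi> i. c p * v $ i)" by (simp add: vec_eq_iff fun_eq_iff)
  moreover have "continuous_on S (\<lambda>p. \<chi> i. c p * v $ i)"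
    by (intro continuous_on_vec_lambda continuous_intros c)
  ultimately show ?thesis by metis
qed

lemma continuous_on_scale_vector: "continuous_on S (\<lambda>v :: complex^'n. c *s v)"
proof -
  have "(\<lambda>v :: complex^'n. c *s v) = (\<lambda>v. \<chi> i. c * v $ i)" by (simp add: vec_eq_iff fun_eq_iff)
  moreover have "continuous_on S (\<lambda>v :: complex^'n. \<chi> i. c * v $ i)"
    by (intro continuous_on_vec_lambda continuous_intros)
  ultimately show ?thesis by metis
qed

lemma continuous_map_cline_comp:
  assumes "continuous_on S f" "\<And>p. p \<in> S \<Longrightarrow> f p \<noteq> 0"
  shows "continuous_map (top_of_set S) proj_top (\<lambda>p. cline (f p))"
proof -
  have "continuous_map (top_of_set S) (top_of_set (UNIV - {0})) f"
    using assms by (intro continuous_map_into_subtopology) auto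
  then have "continuous_map (top_of_set S) proj_top (cline \<circ> f)"
    using continuous_map_cline by (rule continuous_map_compose)
  then show ?thesis by (simp add: o_def)
qed

text \<open>The projection to lines is open: the saturation of V is the union of its rescalings.\<close>

lemma openin_proj_top_image_cline:
  fixes V :: "(complex^'n) set"
  assumes "open V" "0 \<notin> V"
  shows "openin proj_top (cline ` V)"
  unfolding openin_proj_top
proof
  show "cline ` V \<subseteq> proj_space" using assms(2) by (auto simp: proj_space_def)
  have eq: "{v. v \<noteq> 0 \<and> cline v \<in> cline ` V} = (\<Union>c\<in>{c. c \<noteq> 0}. (\<lambda>w. c *s w) -` V)"
  proof (intro set_eqI iffI)
    fix v assume "v \<in> {v. v \<noteq> 0 \<and> cline v \<in> cline ` V}"
    then obtain w where w: "w \<in> V" "cline v = cline w" "v \<noteq> 0" by auto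
    then obtain c where "c \<noteq> 0" "w = c *s v" using cline_eq_iff by blast
    then show "v \<in> (\<Union>c\<in>{c. c \<noteq> 0}. (\<lambda>w. c *s w) -` V)" using w(1) by blast
  next
    fix v assume "v \<in> (\<Union>c\<in>{c. c \<noteq> 0}. (\<lambda>w. c *s w) -` V)"
    then obtain c where c: "c \<noteq> 0" "c *s v \<in> V" by auto
    then have "v \<noteq> 0" using assms(2) by auto
    moreover have "cline v = cline (c *s v)" by (rule cline_scale[OF c(1), symmetric])
    ultimately show "v \<in> {v. v \<noteq> 0 \<and> cline v \<in> cline ` V}" using c(2) by blast
  qed
  show "open {v. v \<noteq> 0 \<and> cline v \<in> cline ` V}"
    unfolding eq by (intro open_UN ballI open_vimage assms(1) continuous_on_scale_vector)
qed

lemma openin_proj_top3_image_cline: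
  fixes E :: "((complex^'n) \<times> (complex^'n) \<times> (complex^'n)) set"
  assumes oE: "open E" and nz: "\<forall>v\<in>E. fst v \<noteq> 0 \<and> fst (snd v) \<noteq> 0 \<and> snd (snd v) \<noteq> 0"
  shows "openin (prod_topology proj_top (prod_topology proj_top proj_top))
    ((\<lambda>v. (cline (fst v), cline (fst (snd v)), cline (snd (snd v)))) ` E)" (is "openin _ (?q ` E)")
  unfolding openin_prod_topology_alt[of proj_top "prod_topology proj_top proj_top"]
proof (intro allI impI)
  fix L1 L23 assume "(L1, L23) \<in> ?q ` E"
  then obtain v where v: "v \<in> E" "(L1, L23) = ?q v" by auto
  obtain A B where AB: "open A" "open B" "v \<in> A \<times> B" "A \<times> B \<subseteq> E"
    using open_prod_elim[OF oE v(1)] by blast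
  obtain A2 A3 where A23: "open A2" "open A3" "snd v \<in> A2 \<times> A3" "A2 \<times> A3 \<subseteq> B"
    using open_prod_elim[OF AB(2)] AB(3) by (metis mem_Times_iff)
  define U where "U = cline ` (A - {0})"
  define V where "V = cline ` (A2 - {0}) \<times> cline ` (A3 - {0})"
  have "openin proj_top U" unfolding U_def by (intro openin_proj_top_image_cline open_Diff AB) auto
  moreover have "openin (prod_topology proj_top proj_top) V" unfolding V_def
    by (intro openin_prod_Times_iff[THEN iffD2] disjI2 conjI openin_proj_top_image_cline open_Diff A23)
      auto
  moreover have "L1 \<in> U" "L23 \<in> V" using v AB(3) A23(3) nz by (auto simp: U_def V_def mem_Times_iff)
  moreover have "U \<times> V \<subseteq> ?q ` E"
  proof
    fix y assume "y \<in> U \<times> V"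
    then obtain w1 w2 w3 where w: "w1 \<in> A - {0}" "w2 \<in> A2 - {0}" "w3 \<in> A3 - {0}"
      "y = (cline w1, cline w2, cline w3)" unfolding U_def V_def by auto
    then have "(w1, w2, w3) \<in> E" using AB(4) A23(4) by auto
    then show "y \<in> ?q ` E" using w(4) by force
  qed
  ultimately show "\<exists>U V. openin proj_top U \<and> openin (prod_topology proj_top proj_top) V \<and>
      L1 \<in> U \<and> L23 \<in> V \<and> U \<times> V \<subseteq> ?q ` E"
    by blast
qed

lemma continuous_on_hform [continuous_intros]:
  "continuous_on S f \<Longrightarrow> continuous_on S g \<Longrightarrow> continuous_on S (\<lambda>x. hform Hm (f x) (g x))"
  unfolding hform_def by (intro continuous_intros)

lemma topspace_Xss_top: "topspace (Xss_top Hm) = Xss Hm"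
  unfolding Xss_top_def Xss_def isotropic_line_def
  by (auto simp: topspace_proj_top proj_space_def)

context lorentzian
begin

lemma openin_Xss_top_pinv_preimage:
  assumes W: "open W"
  shows "openin (Xss_top Hm) {x \<in> Xss Hm. pinv Hm x \<in> W}"
proof -
  define t where "t = (\<lambda>v. triple_product Hm (fst v) (fst (snd v)) (snd (snd v)))"
  define E where "E = {v. fst v \<noteq> 0 \<and> fst (snd v) \<noteq> 0 \<and> snd (snd v) \<noteq> 0 \<and> t v \<noteq> 0}
    \<inter> (\<lambda>v. sgn (t v)) -` W"
  have ct: "continuous_on S t" for S
    unfolding t_def triple_product_def by (intro continuous_intros)
  have "open E" unfolding E_def
    by (intro continuous_open_preimage open_Collect_conj open_Collect_neq continuous_intros ct W) auto
  then have "openin (prod_topology proj_top (prod_topology proj_top proj_top))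
      ((\<lambda>v. (cline (fst v), cline (fst (snd v)), cline (snd (snd v)))) ` E)" (is "openin _ (?q ` E)")
    by (rule openin_proj_top3_image_cline) (auto simp: E_def)
  moreover have "{x \<in> Xss Hm. pinv Hm x \<in> W} = ?q ` E \<inter> Xss Hm"
  proof (intro set_eqI iffI)
    fix x assume x: "x \<in> {x \<in> Xss Hm. pinv Hm x \<in> W}"
    then obtain v1 v2 v3 where V: "x = (cline v1, cline v2, cline v3)" "v1 \<noteq> 0" "v2 \<noteq> 0" "v3 \<noteq> 0"
      "hform Hm v1 v2 \<noteq> 0" "hform Hm v1 v3 \<noteq> 0" "hform Hm v2 v3 \<noteq> 0"
      using Xss_generators by blast
    then have "t (v1, v2, v3) \<noteq> 0"
      by (simp add: t_def triple_product_def hform_conj_sym_eq_0[OF hermitian])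
    then have "(v1, v2, v3) \<in> E" using x V by (simp add: E_def t_def pinv_cline_triple)
    then have "?q (v1, v2, v3) \<in> ?q ` E" by (rule imageI)
    then show "x \<in> ?q ` E \<inter> Xss Hm" using x V(1) by simp
  next
    fix x assume x: "x \<in> ?q ` E \<inter> Xss Hm"
    then obtain w where w: "w \<in> E" "x = ?q w" by blast
    then have "pinv Hm x = sgn (t w)"
      by (simp add: E_def t_def pinv_cline_triple)
    then show "x \<in> {x \<in> Xss Hm. pinv Hm x \<in> W}" using w(1) x by (simp add: E_def)
  qed
  ultimately show ?thesis unfolding Xss_top_def openin_subtopology by blast
qed

end

context lorentzian_std
begin

lemma continuous_map_pinv: "continuous_map (Xss_top Hm) (top_of_set Hset) (pinv Hm)"
proof (rule continuous_map_into_subtopology)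
  show "pinv Hm \<in> topspace (Xss_top Hm) \<rightarrow> Hset"
    using Xss_normal_form(1) by (auto simp: topspace_Xss_top)
  show "continuous_map (Xss_top Hm) euclidean (pinv Hm)"
    unfolding continuous_map_def
    using openin_Xss_top_pinv_preimage by (auto simp: topspace_Xss_top)
qed

lemma continuous_map_std_triple: "continuous_map (top_of_set Hset) (Xss_top Hm) (std_triple e k a b)"
  unfolding Xss_top_def
proof (rule continuous_map_into_subtopology)
  show "std_triple e k a b \<in> topspace (top_of_set Hset) \<rightarrow> Xss Hm"
    using std_triple_in_Xss[OF frame std_indices] by auto
  have "std_vectors e k a b p = (v1, v2, v3) \<Longrightarrow> v1 \<noteq> 0 \<and> v2 \<noteq> 0 \<and> v3 \<noteq> 0"
    if "p \<in> Hset" for p v1 v2 v3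
    using hform_std_vectors[OF frame std_indices, of p v1 v2 v3] that
    by (auto simp: Hset_def)
  then have nz: "p \<in> Hset \<Longrightarrow> fst (std_vectors e k a b p) \<noteq> 0 \<and> fst (snd (std_vectors e k a b p)) \<noteq> 0
      \<and> snd (snd (std_vectors e k a b p)) \<noteq> 0" for p
    by (metis prod.collapse)
  have "std_triple e k a b = (\<lambda>p. (cline (fst (std_vectors e k a b p)),
      cline (fst (snd (std_vectors e k a b p))), cline (snd (snd (std_vectors e k a b p)))))"
    by (simp add: fun_eq_iff std_triple_def split: prod.split)
  moreover have "continuous_on Hset (\<lambda>p. fst (std_vectors e k a b p))"
    "continuous_on Hset (\<lambda>p. fst (snd (std_vectors e k a b p)))"
    "continuous_on Hset (\<lambda>p. snd (snd (std_vectors e k a b p)))"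
    unfolding std_vectors_def frame_comb_def by (simp_all, intro continuous_intros)
  ultimately show "continuous_map (top_of_set Hset)
      (prod_topology proj_top (prod_topology proj_top proj_top)) (std_triple e k a b)"
    using nz by (auto intro!: continuous_map_pairedI continuous_map_cline_comp)
qed

end

section \<open>Orbits and the separated quotient\<close>

context lorentzian_std
begin

lemma orbit_self: "x \<in> orbit Hm x"
  unfolding orbit_def using SU_group_one act_triple_one by (metis (mono_tags, lifting) mem_Collect_eq)

lemma orbit_eq_pinv_fibre:
  assumes x: "x \<in> Xss Hm"
  shows "orbit Hm x = {y \<in> Xss Hm. pinv Hm y = pinv Hm x}"
proof (intro set_eqI iffI)
  fix y assume "y \<in> orbit Hm x"
  then show "y \<in> {y \<in> Xss Hm. pinv Hm y = pinv Hm x}"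
    unfolding orbit_def using act_triple_Xss[OF x] by blast
next
  fix y assume y: "y \<in> {y \<in> Xss Hm. pinv Hm y = pinv Hm x}"
  obtain g1 where g1: "g1 \<in> SU_group Hm" "act_triple g1 x = std_triple e k a b (pinv Hm x)"
    using Xss_normal_form(2)[OF x] by blast
  obtain g2 where g2: "g2 \<in> SU_group Hm" "act_triple g2 y = std_triple e k a b (pinv Hm x)"
    using Xss_normal_form(2)[of y] y by auto
  obtain h where h: "h \<in> SU_group Hm" "h ** g2 = mat 1" using SU_group_left_inverse[OF g2(1)] by blast
  have "act_triple (h ** g1) x = act_triple h (act_triple g2 y)"
    by (simp add: act_triple_mult[symmetric] g1 g2)
  also have "\<dots> = y" by (simp add: act_triple_mult h act_triple_one)
  finally show "y \<in> orbit Hm x" unfolding orbit_def using SU_group_mult[OF g1(1) h(1)] by blast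
qed

lemma closedin_orbit:
  assumes x: "x \<in> Xss Hm"
  shows "closedin (Xss_top Hm) (orbit Hm x)"
proof -
  have "closedin (top_of_set Hset) {pinv Hm x}" using Xss_normal_form(1)[OF x] by simp
  then have "closedin (Xss_top Hm) {y \<in> topspace (Xss_top Hm). pinv Hm y \<in> {pinv Hm x}}"
    by (rule closedin_continuous_map_preimage[OF continuous_map_pinv])
  then show ?thesis unfolding orbit_eq_pinv_fibre[OF x] topspace_Xss_top by simp
qed

lemma closed_orbits_eq: "closed_orbits Hm = orbit Hm ` Xss Hm"
  unfolding closed_orbits_def using closedin_orbit by blast

lemma sep_proj_eq_orbit:
  assumes x: "x \<in> Xss Hm"
  shows "sep_proj Hm x = orbit Hm x"
  unfolding sep_proj_def
proof (rule the_equality)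
  have cl: "Xss_top Hm closure_of orbit Hm x = orbit Hm x"
    by (rule closure_of_closedin[OF closedin_orbit[OF x]])
  then show "orbit Hm x \<in> closed_orbits Hm \<and> orbit Hm x \<subseteq> Xss_top Hm closure_of orbit Hm x"
    using x by (simp add: closed_orbits_eq)
  fix C assume C: "C \<in> closed_orbits Hm \<and> C \<subseteq> Xss_top Hm closure_of orbit Hm x"
  then obtain y where y: "y \<in> Xss Hm" "C = orbit Hm y" by (auto simp: closed_orbits_eq)
  then have "pinv Hm y = pinv Hm x" using C cl orbit_self[of y] orbit_eq_pinv_fibre[OF x] by blast
  then show "C = orbit Hm x" using y orbit_eq_pinv_fibre[OF x] orbit_eq_pinv_fibre[OF y(1)] by simp
qed

end

theorem proposition4p19:
  fixes Hm :: "complex^'n^'n"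
  assumes "CARD('n) \<ge> 3"
    and "hermitian_matrix Hm"
    and "signature_n1_1 Hm"
  shows "\<exists>f. (\<forall>x \<in> Xss Hm. f (sep_proj Hm x) = pinv Hm x)
            \<and> homeomorphic_map (sep_quotient_top Hm) (subtopology euclidean Hset) f"
proof -
  obtain e k where frame: "lorentz_frame Hm k e"
    using assms(3) signature_n1_1_iff_lorentz_frame by blast
  obtain a b where ab: "a \<noteq> k" "b \<noteq> k" "a \<noteq> b"
    using obtain_two_other_indices[OF assms(1)] by blast
  interpret lorentzian_std Hm e k a b
    using assms(2) frame ab by unfold_locales
  have "sep_proj Hm x = sep_proj Hm x' \<longleftrightarrow> pinv Hm x = pinv Hm x'"
    if "x \<in> topspace (Xss_top Hm)" "x' \<in> topspace (Xss_top Hm)" for x x'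
    using that orbit_self[of x] unfolding topspace_Xss_top
    by (auto simp: sep_proj_eq_orbit orbit_eq_pinv_fibre)
  moreover have "sep_proj Hm ` topspace (Xss_top Hm) = closed_orbits Hm"
    by (auto simp: topspace_Xss_top sep_proj_eq_orbit closed_orbits_eq)
  moreover have "pinv Hm (std_triple e k a b p) = p" if "p \<in> topspace (top_of_set Hset)" for p
    using std_triple_in_Xss(2)[OF frame ab] that by simp
  ultimately show ?thesis
    using homeomorphic_map_quotient_same_fibres[OF continuous_map_pinv continuous_map_std_triple]
    unfolding sep_quotient_top_def topspace_Xss_top by blast
qed

end
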